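(* Let $d\ge 1$, let $\mathcal{O}=\{u_1,\dots,u_k\}$ be a set of $k\ge 1$ distinct unit vectors in $\mathbb{R}^d$, and let $\mathcal{C}_{\mathcal{O}}$ be the family of convex polyhedra defined by $\mathcal{O}$. Let $P\subset\mathbb{R}^d$ be a finite set of $n\ge 1$ points. Then there exists a point $p\in P$ such that $p\in C$ for every $C\in\mathcal{C}_{\mathcal{O}}$ with $|C\cap P|>(1-\frac{1}{k})n$.
   Context: For a unit vector $u\in\mathbb{R}^d$ and $t\in\mathbb{R}$, the closed halfspace $\{x\in\mathbb{R}^d:\langle u,x\rangle\le t\}$ is said to have orientation (outward normal) $u$. The family of convex polyhedra defined by $\mathcal{O}$, denoted $\mathcal{C}_{\mathcal{O}}$, is the family of all sets of the form $H_1\cap\dots\cap H_m$ ($m\ge 0$ finite; the empty intersection is $\mathbb{R}^d$), where each $H_j$ is a closed halfspace whose orientation belongs to $\mathcal{O}$. *)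

theory Defs
  imports "HOL-Analysis.Analysis"
begin

definition halfspace_with :: "'a::euclidean_space \<Rightarrow> real \<Rightarrow> 'a set" where
  "halfspace_with u t = {x. inner u x \<le> t}"

text \<open>The family of convex polyhedra defined by a set of orientations Ors:
  all finite intersections (including the empty one, which is UNIV)
  of closed halfspaces whose orientation lies in Ors.\<close>
definition polyhedra_family :: "'a::euclidean_space set \<Rightarrow> 'a set set" where
  "polyhedra_family Ors = {C. \<exists>H. finite H \<and>
      (\<forall>h\<in>H. \<exists>u\<in>Ors. \<exists>t. h = halfspace_with u t) \<and> C = \<Inter>H}"

end

theory Submission
  imports Defs
begin

text \<open>Fix a direction u and call x \<in> P u-exposed if more than (1 - 1/k) n points of P lie
  strictly below x in direction u. Every halfspace with normal u containing more than
  (1 - 1/k) n points of P contains all non-exposed points of P. The exposed points all lie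
  weakly above the lowest exposed point, and more than (1 - 1/k) n points lie strictly below
  it, so fewer than n/k points are u-exposed. Summing over the k directions, some point of P
  is exposed in no direction, and it lies in every polyhedron of the family that contains
  more than (1 - 1/k) n points of P.\<close>

definition exposed_points :: "('a \<Rightarrow> 'b::linorder) \<Rightarrow> real \<Rightarrow> 'a set \<Rightarrow> 'a set" where
  "exposed_points f thr P = {x\<in>P. thr < real (card {y\<in>P. f y < f x})}"

lemma card_exposed_points_less:
  assumes "finite P" and "thr < real (card P)"
  shows "real (card (exposed_points f thr P)) < real (card P) - thr"
proof (cases "exposed_points f thr P = {}")
  case True
  then show ?thesis using assms(2) by simp
next
  case False
  define B where "B = exposed_points f thr P"
  have fin_B: "finite B" using assms(1) by (simp add: B_def exposed_points_def)
  obtain q where q_B: "q \<in> B" and q_min: "\<And>x. x \<in> B \<Longrightarrow> f q \<le> f x"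
    using arg_min_if_finite[OF fin_B False[folded B_def], of f] by (meson not_le)
  define L where "L = {y\<in>P. f y < f q}"
  have "thr < real (card L)" using q_B by (simp add: B_def L_def exposed_points_def)
  moreover have "card B + card L \<le> card P"
  proof -
    have "B \<inter> L = {}" using q_min by (force simp: L_def)
    moreover have "B \<union> L \<subseteq> P" by (auto simp: B_def L_def exposed_points_def)
    ultimately show ?thesis
      using assms(1) by (metis card_Un_disjoint card_mono finite_subset le_supE)
  qed
  ultimately show ?thesis unfolding B_def by linarith
qed

lemma le_if_not_exposed:
  assumes "finite P" and "p \<in> P" and "p \<notin> exposed_points f thr P"
    and "thr < real (card {y\<in>P. f y \<le> t})"
  shows "f p \<le> t"
proof (rule ccontr)
  assume "\<not> f p \<le> t"
  then have "{y\<in>P. f y \<le> t} \<subseteq> {y\<in>P. f y < f p}" by auto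
  then have "card {y\<in>P. f y \<le> t} \<le> card {y\<in>P. f y < f p}"
    using assms(1) by (intro card_mono) auto
  then show False using assms by (simp add: exposed_points_def)
qed

lemma exists_point_outside_small_sets:
  fixes B :: "'i \<Rightarrow> 'a set"
  assumes "finite I" and "I \<noteq> {}" and "finite P" and "\<And>i. i \<in> I \<Longrightarrow> finite (B i)"
    and "\<And>i. i \<in> I \<Longrightarrow> real (card (B i)) < real (card P) / real (card I)"
  shows "\<exists>p\<in>P. \<forall>i\<in>I. p \<notin> B i"
proof -
  have "real (card (\<Union>i\<in>I. B i)) \<le> (\<Sum>i\<in>I. real (card (B i)))"
    using card_UN_le[OF assms(1), of B] by (metis of_nat_le_iff of_nat_sum)
  also have "\<dots> < (\<Sum>i\<in>I. real (card P) / real (card I))"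
    using assms by (intro sum_strict_mono) auto
  also have "\<dots> = real (card P)" using assms(1,2) by simp
  finally have "card (\<Union>i\<in>I. B i) < card P" by simp
  then have "\<not> P \<subseteq> (\<Union>i\<in>I. B i)"
    using assms(1,4) by (metis card_mono finite_UN_I leD)
  then show ?thesis by blast
qed

lemma mem_polyhedron_if_mem_containing_halfspaces:
  assumes "C \<in> polyhedra_family Ors"
    and "\<And>u t. u \<in> Ors \<Longrightarrow> C \<subseteq> halfspace_with u t \<Longrightarrow> p \<in> halfspace_with u t"
  shows "p \<in> C"
proof -
  obtain H where H: "\<forall>h\<in>H. \<exists>u\<in>Ors. \<exists>t. h = halfspace_with u t" and C: "C = \<Inter>H"
    using assms(1) unfolding polyhedra_family_def by blast
  show ?thesis unfolding C
  proof
    fix h assume "h \<in> H"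
    with H C obtain u t where "u \<in> Ors" "h = halfspace_with u t" "C \<subseteq> h" by blast
    then show "p \<in> h" using assms(2) by blast
  qed
qed

theorem theorem1:
  fixes Ors :: "'a::euclidean_space set" and P :: "'a set" and k n :: nat
  assumes "finite Ors" and "card Ors = k" and "k \<ge> 1"
    and "\<forall>u\<in>Ors. norm u = 1"
    and "finite P" and "card P = n" and "n \<ge> 1"
  shows "\<exists>p\<in>P. \<forall>C\<in>polyhedra_family Ors.
           real (card (C \<inter> P)) > (1 - 1 / real k) * real n \<longrightarrow> p \<in> C"
proof -
  define thr where "thr = (1 - 1 / real k) * real n"
  have gap: "real n - thr = real n / real k" using assms(3) by (simp add: thr_def field_simps)
  moreover have "real n / real k > 0" using assms(3,7) by simp
  ultimately have "thr < real (card P)" using assms(6) by simp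
  then obtain p where p: "p \<in> P"
    and not_exposed: "\<And>u. u \<in> Ors \<Longrightarrow> p \<notin> exposed_points (inner u) thr P"
    using exists_point_outside_small_sets[of Ors P "\<lambda>u. exposed_points (inner u) thr P"]
      card_exposed_points_less[OF assms(5)] assms(1,2,3,5,6) gap
    by (fastforce simp: exposed_points_def)
  have "p \<in> C" if "C \<in> polyhedra_family Ors" and big: "thr < real (card (C \<inter> P))" for C
  proof (rule mem_polyhedron_if_mem_containing_halfspaces[OF that(1)])
    fix u t assume u: "u \<in> Ors" and "C \<subseteq> halfspace_with u t"
    then have "card (C \<inter> P) \<le> card {y\<in>P. inner u y \<le> t}"
      using assms(5) by (intro card_mono) (auto simp: halfspace_with_def)
    then have "inner u p \<le> t"
      using le_if_not_exposed[OF assms(5) p not_exposed[OF u]] big by simp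
    then show "p \<in> halfspace_with u t" by (simp add: halfspace_with_def)
  qed
  then show ?thesis using p unfolding thr_def by blast
qed

end
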